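(* Consider the looped drop-and-shuffle Markov chain described in the context, with parameters $r\ge1$ and $p_d\in(1-\frac{1}{\sqrt r},1)$. (1) Let $s$ be a recursive sub-tree root with prefix $\rho$ and let $\tau=(\tau_1,\ldots,\tau_l)\in\{1,\ldots,r\}^l$, $l\ge0$. Then $$\Pr[H_s^{A_{\rho\tau}}>H_s^{\mathrm{Pop}(s)}]=1-(1-p_d)^{2l+1};$$ in particular, this probability depends only on $l$ and not on the values $\tau_i$ or on $\rho$. (2) Let $s$ be a recursive sub-tree root with prefix $\rho$ and let $\tau$ be any finite sequence over $\{1,\ldots,r\}$. Then $m_s(A_{\rho\tau}\cup\{\mathrm{Pop}(s)\})=m_\varepsilon(A_\tau\cup\{\bot\})$.
   Context: Fix an integer $r\ge1$ and a drop probability $p_d\in[0,1]$. Let $S_{\mathrm{Sel}}=\{[\,],\ [H|T],\ [\,][H|T],\ [H|T][\,]\}$ (four formal symbols) and let $S_{\mathrm{Com}}$ be the set of nonempty tuples $(y_1,\ldots,y_l)$, $1\le l\le r$, of pairwise distinct elements of $\{1,\ldots,r\}$. Pairs in $S_{\mathrm{Sel}}\times S_{\mathrm{Com}}$ are written $\langle x,y\rangle$. Let $W=(S_{\mathrm{Sel}}\times S_{\mathrm{Com}})^*$ be the set of finite words of such pairs, including the empty word $\varepsilon$. The state space is $W\cup\{w\cdot x: w\in W,\ x\in S_{\mathrm{Sel}}\}\cup\{\bot\}$, the initial state is $\varepsilon$. Define $\mathrm{Pop}$ recursively by $\mathrm{Pop}(\varepsilon)=\bot$, $\mathrm{Pop}(w\cdot[\,][H|T])=w\cdot[H|T]$,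 $\mathrm{Pop}(w\cdot[H|T][\,])=w\cdot[\,]$, $\mathrm{Pop}(w\cdot[\,])=\mathrm{Pop}(w)$, $\mathrm{Pop}(w\cdot[H|T])=\mathrm{Pop}(w)$, $\mathrm{Pop}(w\cdot\langle x,(y_1)\rangle)=\mathrm{Pop}(w\cdot x)$, and $\mathrm{Pop}(w\cdot\langle x,(y_1,y_2,\ldots,y_l)\rangle)=w\cdot\langle x,(y_2,\ldots,y_l)\rangle$ for $l\ge2$. Transition probabilities, for $w\in W$ (unlisted ones are $0$): from $w$, go to $w\cdot[H|T][\,]$ and to $w\cdot[\,][H|T]$ each with probability $(1-p_d)^2/2$, to $w\cdot[\,]$ and to $w\cdot[H|T]$ each with probability $p_d(1-p_d)$, and to $\mathrm{Pop}(w)$ with probability $p_d^2$; from $w\cdot x$ with $x\in\{[H|T],[H|T][\,]\}$, go to $w\cdot\langle x,(y_1,\ldots,y_l)\rangle$ with probability $p_d^{r-l}(1-p_d)^l/l!$ for each $(y_1,\ldots,y_l)\in S_{\mathrm{Com}}$, and to $\mathrm{Pop}(w\cdot x)$ with probability $p_d^r$; from $w\cdot x$ with $x\in\{[\,],[\,][H|T]\}$, go to $\mathrm{Pop}(w\cdot x)$ with probability $1$; and (looping) $p(\bot,\varepsilon)=1$. A recursive sub-tree root is a state $s=\langle x_1,y_1\rangle\cdots\langle x_m,y_m\rangle\in W$ with $m\ge1$, where $y_j=(y_{j,1},\ldots,y_{j,n_j})$; its prefix is the sequence $(y_{1,1},\ldots,y_{m,1})$. A state $w\cdot x$ with $w=\langle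 x_1,y_1\rangle\cdots\langle x_m,y_m\rangle\in W$ ($m\ge0$) and $x\in\{[\,],[\,][H|T]\}$ outputs the sequence $(y_{1,1},\ldots,y_{m,1})$; for a finite sequence $\sigma$ over $\{1,\ldots,r\}$, $A_\sigma$ is the set of states outputting $\sigma$, and $\rho\tau$ denotes concatenation. For a non-empty set $B$ of states and a state $z$, $H_z^B=\inf\{n\ge0:X_n\in B\}$ for the chain started at $X_0=z$ ($H_z^b:=H_z^{\{b\}}$), and $m_z(B)=\mathbb{E}[H_z^B]$. *)

theory Defs
  imports "HOL-Probability.Probability_Mass_Function"
begin

text \<open>The four formal selector symbols: [], [H|T], [][H|T], [H|T][].\<close>
datatype sel = SNil | SCons | SNilCons | SConsNil

text \<open>Words in W are represented REVERSED: the head of the list is the LAST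
  letter of the word. So the list (x,y) # w represents the word w . <x,y>.\<close>
type_synonym word = "(sel \<times> nat list) list"

datatype state = W word | WX word sel | Bot

definition com_set :: "nat \<Rightarrow> nat list set" where
  "com_set r = {ys. ys \<noteq> [] \<and> distinct ys \<and> set ys \<subseteq> {1..r}}"

definition valid_word :: "nat \<Rightarrow> word \<Rightarrow> bool" where
  "valid_word r w \<longleftrightarrow> (\<forall>(x,y)\<in>set w. y \<in> com_set r)"

text \<open>Pop (the last two equations only cover junk arguments outside the state space).\<close>
function pop :: "state \<Rightarrow> state" where
  "pop (W []) = Bot"
| "pop (WX w SNilCons) = WX w SCons"
| "pop (WX w SConsNil) = WX w SNil"
| "pop (WX w SNil) = pop (W w)"
| "pop (WX w SCons) = pop (W w)"
| "pop (W ((x, [y]) # w)) = pop (WX w x)"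
| "pop (W ((x, y1 # y2 # ys) # w)) = W ((x, y2 # ys) # w)"
| "pop (W ((x, []) # w)) = Bot"
| "pop Bot = Bot"
  by pat_completeness auto
termination
  by (relation "Wellfounded.measure (\<lambda>s. case s of W w \<Rightarrow> 2 * length w
                                  | WX w x \<Rightarrow> 2 * length w + 1 | Bot \<Rightarrow> 0)") auto

fun trans_prob :: "nat \<Rightarrow> real \<Rightarrow> state \<Rightarrow> state \<Rightarrow> real" where
  "trans_prob r pd (W w) z' =
     (if z' = WX w SConsNil then (1 - pd)^2 / 2 else 0)
   + (if z' = WX w SNilCons then (1 - pd)^2 / 2 else 0)
   + (if z' = WX w SNil then pd * (1 - pd) else 0)
   + (if z' = WX w SCons then pd * (1 - pd) else 0)
   + (if z' = pop (W w) then pd^2 else 0)"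
| "trans_prob r pd (WX w x) z' =
     (if x \<in> {SCons, SConsNil} then
        (\<Sum>ys\<in>com_set r. if z' = W ((x, ys) # w)
              then pd ^ (r - length ys) * (1 - pd) ^ length ys / fact (length ys) else 0)
        + (if z' = pop (WX w x) then pd ^ r else 0)
      else (if z' = pop (WX w x) then 1 else 0))"
| "trans_prob r pd Bot z' = (if z' = W [] then 1 else 0)"

definition kernel :: "nat \<Rightarrow> real \<Rightarrow> state \<Rightarrow> state pmf" where
  "kernel r pd z = embed_pmf (trans_prob r pd z)"

primrec traj :: "nat \<Rightarrow> real \<Rightarrow> nat \<Rightarrow> state \<Rightarrow> state list pmf" where
  "traj r pd 0 z = return_pmf [z]"
| "traj r pd (Suc n) z =
     bind_pmf (kernel r pd z) (\<lambda>z'. map_pmf (\<lambda>p. z # p) (traj r pd n z'))"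

definition first_hit_at :: "state set \<Rightarrow> state list \<Rightarrow> nat \<Rightarrow> bool" where
  "first_hit_at B p k \<longleftrightarrow> k < length p \<and> p ! k \<in> B \<and> (\<forall>j<k. p ! j \<notin> B)"

definition hit_time_prob :: "nat \<Rightarrow> real \<Rightarrow> state \<Rightarrow> state set \<Rightarrow> nat \<Rightarrow> real" where
  "hit_time_prob r pd z B k = measure_pmf.prob (traj r pd k z) {p. first_hit_at B p k}"

text \<open>m_z(B) = E[H_z^B] in [0,\<infinity>]:
  sum over k of k * Pr[H = k], plus \<infinity> * Pr[H = \<infinity>].\<close>
definition exp_hit :: "nat \<Rightarrow> real \<Rightarrow> state \<Rightarrow> state set \<Rightarrow> ennreal" where
  "exp_hit r pd z B =
     (\<Sum>k. of_nat k * ennreal (hit_time_prob r pd z B k))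
     + \<infinity> * ennreal (1 - (\<Sum>k. hit_time_prob r pd z B k))"

text \<open>Pr[H_z^A > H_z^b] = sum over k of Pr[H_z^b = k and H_z^A > k].\<close>
definition hit_before_prob :: "nat \<Rightarrow> real \<Rightarrow> state \<Rightarrow> state set \<Rightarrow> state \<Rightarrow> real" where
  "hit_before_prob r pd z A b =
     (\<Sum>k. measure_pmf.prob (traj r pd k z)
            {p. first_hit_at {b} p k \<and> (\<forall>j\<le>k. p ! j \<notin> A)})"

definition out_seq :: "word \<Rightarrow> nat list" where
  "out_seq w = map (\<lambda>(x, y). hd y) (rev w)"

definition subtree_root :: "nat \<Rightarrow> state \<Rightarrow> bool" where
  "subtree_root r s \<longleftrightarrow> (\<exists>w. s = W w \<and> w \<noteq> [] \<and> valid_word r w)"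

definition root_prefix :: "state \<Rightarrow> nat list" where
  "root_prefix s = (case s of W w \<Rightarrow> out_seq w | _ \<Rightarrow> [])"

definition outA :: "nat \<Rightarrow> nat list \<Rightarrow> state set" where
  "outA r \<sigma> = {WX w x | w x. valid_word r w \<and> x \<in> {SNil, SNilCons} \<and> out_seq w = \<sigma>}"

end

theory Submission
  imports Defs "HOL-Combinatorics.Multiset_Permutations" "HOL-Library.Sublist"
begin

text \<open>Below a sub-tree root \<open>w\<close> the chain moves exactly like the chain started at \<open>\<epsilon>\<close>, with
  every state shifted by \<open>w\<close> and with \<open>\<bottom>\<close> replaced by \<open>Pop(w)\<close>. So the hitting times of
  \<open>A\<^bsub>\<rho>\<tau>\<^esub> \<union> {Pop(w)}\<close> from \<open>w\<close> have the law of the hitting times of \<open>A\<^sub>\<tau> \<union> {\<bottom>}\<close> from \<open>\<epsilon>\<close>,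
  which is (2) and reduces (1) to the root. There the probability of reaching \<open>\<bottom>\<close> before \<open>A\<^sub>\<tau>\<close>
  is a product of explicit factors, one for each pending frame of the stack: this product is a
  bounded function, harmonic off \<open>A\<^sub>\<tau> \<union> {\<bottom>}\<close>, with the right boundary values, and it equals the
  hitting probability because the chain hits \<open>A\<^sub>\<tau> \<union> {\<bottom>}\<close> almost surely. The latter follows from
  a Lyapunov function that is linear in the stack; its drift is negative because
  \<open>r(1 - p\<^sub>d)\<^sup>2 < 1\<close>.\<close>

section \<open>Killed expectations of a Markov chain with finitely supported steps\<close>

locale finite_kernel =
  fixes K :: "'s \<Rightarrow> 's pmf"
  assumes finite_set_pmf_kernel: "finite (set_pmf (K z))"
begin

definition trans_op :: "('s \<Rightarrow> real) \<Rightarrow> 's \<Rightarrow> real" where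
  "trans_op g z = measure_pmf.expectation (K z) g"

lemma integrable_kernel [simp]: "integrable (measure_pmf (K z)) (g :: 's \<Rightarrow> real)"
  by (simp add: integrable_measure_pmf_finite finite_set_pmf_kernel)

lemma trans_op_const [simp]: "trans_op (\<lambda>_. c) z = c"
  by (simp add: trans_op_def)

lemma trans_op_cong:
  "(\<And>z'. z' \<in> set_pmf (K z) \<Longrightarrow> g z' = h z') \<Longrightarrow> trans_op g z = trans_op h z"
  unfolding trans_op_def by (rule integral_cong_AE) (auto simp: AE_measure_pmf_iff)

lemma trans_op_add: "trans_op (\<lambda>z'. g z' + h z') z = trans_op g z + trans_op h z"
  by (simp add: trans_op_def)

lemma trans_op_sum: "trans_op (\<lambda>z'. \<Sum>i\<in>I. g i z') z = (\<Sum>i\<in>I. trans_op (g i) z)"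
  by (simp add: trans_op_def)

lemma trans_op_cmult: "trans_op (\<lambda>z'. c * g z') z = c * trans_op g z"
  by (simp add: trans_op_def)

lemma trans_op_mono:
  "(\<And>z'. z' \<in> set_pmf (K z) \<Longrightarrow> g z' \<le> h z') \<Longrightarrow> trans_op g z \<le> trans_op h z"
  unfolding trans_op_def by (rule integral_mono_AE) (auto simp: AE_measure_pmf_iff)

lemma trans_op_nonneg: "(\<And>z'. z' \<in> set_pmf (K z) \<Longrightarrow> 0 \<le> g z') \<Longrightarrow> 0 \<le> trans_op g z"
  using trans_op_mono[of z "\<lambda>_. 0" g] by simp

lemma abs_trans_op_le: "\<bar>trans_op g z\<bar> \<le> trans_op (\<lambda>z'. \<bar>g z'\<bar>) z"
  unfolding trans_op_def by (rule integral_abs_bound)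

text \<open>\<open>killed B g k z\<close> is the expectation of \<open>g(X\<^sub>k)\<close> on the event \<open>H\<^sub>z\<^sup>B \<ge> k\<close>.\<close>

primrec killed :: "'s set \<Rightarrow> ('s \<Rightarrow> real) \<Rightarrow> nat \<Rightarrow> 's \<Rightarrow> real" where
  "killed B g 0 z = g z"
| "killed B g (Suc k) z = (if z \<in> B then 0 else trans_op (killed B g k) z)"

definition survival :: "'s set \<Rightarrow> nat \<Rightarrow> 's \<Rightarrow> real" where
  "survival B = killed B (\<lambda>z. if z \<in> B then 0 else 1)"

lemma survival_0 [simp]: "survival B 0 z = (if z \<in> B then 0 else 1)"
  by (simp add: survival_def)

lemma survival_Suc [simp]:
  "survival B (Suc k) z = (if z \<in> B then 0 else trans_op (survival B k) z)"
  by (simp add: survival_def)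

lemma survival_nonneg: "0 \<le> survival B k z"
  by (induction k arbitrary: z) (auto intro!: trans_op_nonneg)

lemma sum_survival_le_lyapunov:
  assumes V_nonneg: "\<And>z. 0 \<le> V z"
    and drift: "\<And>z. z \<notin> B \<Longrightarrow> trans_op V z \<le> V z - 1"
  shows "(\<Sum>j<n. survival B j z) \<le> V z"
proof (induction n arbitrary: z)
  case 0
  then show ?case by (simp add: V_nonneg)
next
  case (Suc n)
  show ?case
  proof (cases "z \<in> B")
    case True
    then show ?thesis
      by (simp add: sum.lessThan_Suc_shift V_nonneg del: sum.lessThan_Suc)
  next
    case False
    have "(\<Sum>j<n. survival B (Suc j) z) = trans_op (\<lambda>z'. \<Sum>j<n. survival B j z') z"
      using False by (simp add: trans_op_sum)
    also have "\<dots> \<le> trans_op V z"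
      by (rule trans_op_mono) (rule Suc.IH)
    finally show ?thesis
      using False drift[OF False] by (simp add: sum.lessThan_Suc_shift del: sum.lessThan_Suc)
  qed
qed

lemma survival_tendsto_0:
  assumes "\<And>z. 0 \<le> V z" and "\<And>z. z \<notin> B \<Longrightarrow> trans_op V z \<le> V z - 1"
  shows "(\<lambda>k. survival B k z) \<longlonglongrightarrow> 0"
proof -
  have "summable (\<lambda>k. survival B k z)"
  proof (rule bounded_imp_summable)
    show "(\<Sum>k\<le>n. survival B k z) \<le> V z" for n
      using sum_survival_le_lyapunov[where n="Suc n"] assms by (simp add: lessThan_Suc_atMost)
  qed (rule survival_nonneg)
  then show ?thesis
    by (rule summable_LIMSEQ_zero)
qed

text \<open>Optional stopping: the remainder after \<open>n\<close> steps is at most \<open>M\<close> times the survival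
  probability.\<close>

lemma harmonic_sums_killed:
  assumes invariant: "\<And>z z'. z \<in> S \<Longrightarrow> z' \<in> set_pmf (K z) \<Longrightarrow> z' \<in> S"
    and bounded: "\<And>z. \<bar>f z\<bar> \<le> M"
    and harmonic: "\<And>z. z \<in> S \<Longrightarrow> z \<notin> B \<Longrightarrow> trans_op f z = f z"
    and "z \<in> S"
    and survival: "(\<lambda>k. survival B k z) \<longlonglongrightarrow> 0"
  shows "(\<lambda>k. killed B (\<lambda>z. if z \<in> B then f z else 0) k z) sums f z"
proof -
  let ?hit = "killed B (\<lambda>z. if z \<in> B then f z else 0)"
  let ?rest = "killed B (\<lambda>z. if z \<in> B then 0 else f z)"
  have split_at: "f z = (\<Sum>k\<le>n. ?hit k z) + ?rest n z" if "z \<in> S" for n z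
    using that
  proof (induction n arbitrary: z)
    case (Suc n)
    show ?case
    proof (cases "z \<in> B")
      case False
      have "f z = trans_op f z"
        using harmonic[OF Suc.prems False] by simp
      also have "\<dots> = trans_op (\<lambda>z'. (\<Sum>k\<le>n. ?hit k z') + ?rest n z') z"
        by (rule trans_op_cong) (rule Suc.IH[OF invariant[OF Suc.prems]])
      finally have "f z = trans_op (\<lambda>z'. (\<Sum>k\<le>n. ?hit k z') + ?rest n z') z" .
      then show ?thesis
        using False by (simp add: trans_op_add trans_op_sum sum.atMost_Suc_shift del: sum.atMost_Suc)
    qed (simp add: sum.atMost_Suc_shift del: sum.atMost_Suc)
  qed simp
  have rest_le: "\<bar>?rest n z\<bar> \<le> M * survival B n z" for n z
  proof (induction n arbitrary: z)
    case 0
    then show ?case using bounded by simp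
  next
    case (Suc n)
    have "\<bar>trans_op (?rest n) z\<bar> \<le> trans_op (\<lambda>z'. M * survival B n z') z"
      by (rule order.trans[OF abs_trans_op_le trans_op_mono]) (rule Suc.IH)
    then show ?case by (simp add: trans_op_cmult)
  qed
  have "(\<lambda>n. M * survival B n z) \<longlonglongrightarrow> 0"
    using tendsto_mult[OF tendsto_const survival, of M] by simp
  then have "(\<lambda>n. ?rest n z) \<longlonglongrightarrow> 0"
    by (rule Lim_null_comparison[OF always_eventually, rotated]) (use rest_le in simp)
  from tendsto_diff[OF tendsto_const this]
  have "(\<lambda>n. f z - ?rest n z) \<longlonglongrightarrow> f z"
    by simp
  moreover have "(\<lambda>n. f z - ?rest n z) = (\<lambda>n. \<Sum>k\<le>n. ?hit k z)"
    using split_at[OF \<open>z \<in> S\<close>] by (intro ext) (metis add_diff_cancel_right')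
  ultimately show ?thesis
    unfolding sums_def_le by simp
qed

lemma killed_transfer:
  assumes invariant: "\<And>z z'. z \<in> S \<Longrightarrow> z' \<in> set_pmf (K z) \<Longrightarrow> z' \<in> S"
    and intertwine: "\<And>z h. z \<in> S \<Longrightarrow> z \<notin> B \<Longrightarrow> trans_op h (f z) = trans_op (\<lambda>z'. h (f z')) z"
    and target: "\<And>z. z \<in> S \<Longrightarrow> f z \<in> B' \<longleftrightarrow> z \<in> B"
    and boundary: "\<And>z. z \<in> S \<Longrightarrow> g' (f z) = g z"
    and "z \<in> S"
  shows "killed B' g' k (f z) = killed B g k z"
  using \<open>z \<in> S\<close>
proof (induction k arbitrary: z)
  case (Suc k)
  show ?case
  proof (cases "z \<in> B")
    case False
    have "trans_op (killed B' g' k) (f z) = trans_op (\<lambda>z'. killed B' g' k (f z')) z"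
      by (rule intertwine[OF Suc.prems False])
    also have "\<dots> = trans_op (killed B g k) z"
      by (rule trans_op_cong) (rule Suc.IH[OF invariant[OF Suc.prems]])
    finally show ?thesis
      using False target[OF Suc.prems] by simp
  qed (use target[OF Suc.prems] in simp)
qed (simp add: boundary)

end

section \<open>The transition operator of the chain\<close>

definition com_prob :: "nat \<Rightarrow> real \<Rightarrow> nat list \<Rightarrow> real" where
  "com_prob r pd ys = pd ^ (r - length ys) * (1 - pd) ^ length ys / fact (length ys)"

definition successors :: "nat \<Rightarrow> state \<Rightarrow> state set" where
  "successors r z = (case z of
      W w \<Rightarrow> {WX w SConsNil, WX w SNilCons, WX w SNil, WX w SCons, pop (W w)}
    | WX w x \<Rightarrow> (\<lambda>ys. W ((x, ys) # w)) ` com_set r \<union> {pop (WX w x)}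
    | Bot \<Rightarrow> {W []})"

fun chain_op :: "nat \<Rightarrow> real \<Rightarrow> (state \<Rightarrow> real) \<Rightarrow> state \<Rightarrow> real" where
  "chain_op r pd g (W w) =
     (1 - pd)\<^sup>2 / 2 * g (WX w SConsNil) + (1 - pd)\<^sup>2 / 2 * g (WX w SNilCons)
     + pd * (1 - pd) * g (WX w SNil) + pd * (1 - pd) * g (WX w SCons) + pd\<^sup>2 * g (pop (W w))"
| "chain_op r pd g (WX w x) =
     (if x \<in> {SCons, SConsNil}
      then (\<Sum>ys\<in>com_set r. com_prob r pd ys * g (W ((x, ys) # w))) + pd ^ r * g (pop (WX w x))
      else g (pop (WX w x)))"
| "chain_op r pd g Bot = g (W [])"

lemma finite_com_set: "finite (com_set r)"
proof -
  have "com_set r \<subseteq> {xs. set xs \<subseteq> {1..r} \<and> distinct xs}"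
    by (auto simp: com_set_def)
  then show ?thesis
    using finite_subset_distinct[of "{1..r}"] finite_subset by blast
qed

lemma finite_successors: "finite (successors r z)"
  by (cases z) (auto simp: successors_def finite_com_set)

lemma image_set_com_set: "set ` com_set r = Pow {1..r} - {{}}"
proof
  show "Pow {1..r} - {{}} \<subseteq> set ` com_set r"
  proof
    fix S assume S: "S \<in> Pow {1..r} - {{}}"
    then obtain xs where "set xs = S" "distinct xs"
      using finite_distinct_list[of S] finite_subset by auto
    with S show "S \<in> set ` com_set r"
      by (auto simp: com_set_def)
  qed
qed (auto simp: com_set_def)

text \<open>Choosing a tuple with probability \<open>com_prob\<close> amounts to keeping each \<open>x \<in> {1..r}\<close>
  independently with probability \<open>1 - pd\<close> and then ordering the kept ones uniformly at random.\<close>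

lemma sum_com_prob_prod_list:
  "(\<Sum>ys\<in>com_set r. com_prob r pd ys * (\<Prod>y\<leftarrow>ys. f y)) + pd ^ r
     = (\<Prod>x\<in>{1..r}. (1 - pd) * f x + pd)"
proof -
  define weight where
    "weight S = (\<Prod>x\<in>S. (1 - pd) * f x) * (\<Prod>x\<in>{1..r} - S. pd)" for S
  have orderings: "(\<Sum>ys\<in>{ys \<in> com_set r. set ys = S}. com_prob r pd ys * (\<Prod>y\<leftarrow>ys. f y))
      = weight S" if S: "S \<in> Pow {1..r} - {{}}" for S
  proof -
    have fin: "finite S" "S \<subseteq> {1..r}"
      using S finite_subset by auto
    have "{ys \<in> com_set r. set ys = S} = permutations_of_set S"
      using S by (auto simp: com_set_def permutations_of_set_def)
    moreover have "com_prob r pd ys * (\<Prod>y\<leftarrow>ys. f y)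
        = pd ^ (r - card S) * (1 - pd) ^ card S / fact (card S) * (\<Prod>x\<in>S. f x)"
      if "ys \<in> permutations_of_set S" for ys
      using that by (auto simp: com_prob_def permutations_of_set_def distinct_card prod.distinct_set_conv_list)
    ultimately have "(\<Sum>ys\<in>{ys \<in> com_set r. set ys = S}. com_prob r pd ys * (\<Prod>y\<leftarrow>ys. f y))
        = pd ^ (r - card S) * (1 - pd) ^ card S * (\<Prod>x\<in>S. f x)"
      using fin by simp
    also have "\<dots> = weight S"
      using fin by (simp add: weight_def prod.distrib card_Diff_subset)
    finally show ?thesis .
  qed
  have "(\<Sum>ys\<in>com_set r. com_prob r pd ys * (\<Prod>y\<leftarrow>ys. f y))
      = (\<Sum>S\<in>set ` com_set r. \<Sum>ys\<in>{ys \<in> com_set r. set ys = S}. com_prob r pd ys * (\<Prod>y\<leftarrow>ys. f y))"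
    by (rule sum.image_gen[OF finite_com_set])
  also have "\<dots> = (\<Sum>S\<in>Pow {1..r} - {{}}. weight S)"
    unfolding image_set_com_set by (rule sum.cong) (simp_all add: orderings)
  finally have "(\<Sum>ys\<in>com_set r. com_prob r pd ys * (\<Prod>y\<leftarrow>ys. f y)) + pd ^ r
      = weight {} + (\<Sum>S\<in>Pow {1..r} - {{}}. weight S)"
    by (simp add: weight_def)
  also have "\<dots> = (\<Sum>S\<in>Pow {1..r}. weight S)"
    by (rule sum.remove[symmetric]) auto
  also have "\<dots> = (\<Prod>x\<in>{1..r}. (1 - pd) * f x + pd)"
    unfolding weight_def by (rule prod_add[symmetric]) simp
  finally show ?thesis .
qed

lemma sum_com_prob: "(\<Sum>ys\<in>com_set r. com_prob r pd ys) + pd ^ r = 1"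
  using sum_com_prob_prod_list[of r pd "\<lambda>_. 1"] by (simp add: map_replicate_const)

lemma sum_com_prob_member:
  assumes "t \<in> {1..r}"
  shows "(\<Sum>ys\<in>com_set r. com_prob r pd ys * (if t \<in> set ys then c else 1)) + pd ^ r
           = 1 - (1 - pd) * (1 - c)"
proof -
  have "(if t \<in> set ys then c else 1) = (\<Prod>y\<leftarrow>ys. if y = t then c else 1)"
    if "ys \<in> com_set r" for ys
    using that by (simp add: com_set_def prod.distinct_set_conv_list[symmetric])
  then have "(\<Sum>ys\<in>com_set r. com_prob r pd ys * (if t \<in> set ys then c else 1))
      = (\<Sum>ys\<in>com_set r. com_prob r pd ys * (\<Prod>y\<leftarrow>ys. if y = t then c else 1))"
    by (intro sum.cong) simp_all
  then have "(\<Sum>ys\<in>com_set r. com_prob r pd ys * (if t \<in> set ys then c else 1)) + pd ^ r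
      = (\<Prod>x\<in>{1..r}. (1 - pd) * (if x = t then c else 1) + pd)"
    by (simp only: sum_com_prob_prod_list)
  also have "\<dots> = (\<Prod>x\<in>{1..r}. if x = t then (1 - pd) * c + pd else 1)"
    by (rule prod.cong) auto
  finally show ?thesis
    using assms by (simp add: algebra_simps)
qed

lemma sum_com_prob_length: "(\<Sum>ys\<in>com_set r. com_prob r pd ys * length ys) = r * (1 - pd)"
proof -
  have "real (length ys) = (\<Sum>t\<in>{1..r}. if t \<in> set ys then 1 else 0)" if "ys \<in> com_set r" for ys
    using that by (simp add: com_set_def distinct_card[symmetric] sum.If_cases Int_absorb1)
  then have "(\<Sum>ys\<in>com_set r. com_prob r pd ys * length ys)
      = (\<Sum>ys\<in>com_set r. \<Sum>t\<in>{1..r}. com_prob r pd ys * (if t \<in> set ys then 1 else 0))"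
    by (intro sum.cong) (simp_all add: sum_distrib_left)
  also have "\<dots> = (\<Sum>t\<in>{1..r}. 1 - pd)"
  proof (subst sum.swap, rule sum.cong[OF refl])
    fix t assume "t \<in> {1..r}"
    have "(\<Sum>ys\<in>com_set r. com_prob r pd ys * (if t \<in> set ys then 1 else 0))
        = (\<Sum>ys\<in>com_set r. com_prob r pd ys)
          - (\<Sum>ys\<in>com_set r. com_prob r pd ys * (if t \<in> set ys then 0 else 1))"
      by (subst sum_subtractf[symmetric]) (rule sum.cong, auto)
    then show "(\<Sum>ys\<in>com_set r. com_prob r pd ys * (if t \<in> set ys then 1 else 0)) = 1 - pd"
      using sum_com_prob_member[OF \<open>t \<in> {1..r}\<close>, of pd 0] sum_com_prob[of r pd] by simp
  qed
  finally show ?thesis by simp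
qed

lemma trans_prob_eq_0:
  assumes "z' \<notin> successors r z"
  shows "trans_prob r pd z z' = 0"
proof (cases z)
  case (WX w x)
  then have "z' \<noteq> W ((x, ys) # w)" if "ys \<in> com_set r" for ys
    using assms that by (auto simp: successors_def)
  then show ?thesis
    using assms WX by (simp add: successors_def sum.neutral)
qed (use assms in \<open>auto simp: successors_def\<close>)

lemma trans_prob_nonneg:
  assumes "0 \<le> pd" "pd \<le> 1"
  shows "0 \<le> trans_prob r pd z z'"
proof (cases z)
  case (W w)
  then show ?thesis
    using assms by (simp only: trans_prob.simps) (intro add_nonneg_nonneg; simp)
next
  case (WX w x)
  have "0 \<le> (\<Sum>ys\<in>com_set r. if z' = W ((x, ys) # w)
      then pd ^ (r - length ys) * (1 - pd) ^ length ys / fact (length ys) else 0)"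
    using assms by (intro sum_nonneg) auto
  moreover have "0 \<le> pd ^ r"
    using assms by simp
  ultimately show ?thesis
    unfolding WX trans_prob.simps by (smt (verit))
qed simp

lemma sum_trans_prob_mult:
  "(\<Sum>z'\<in>successors r z. trans_prob r pd z z' * g z') = chain_op r pd g z"
proof -
  have point_mass: "(\<Sum>z'\<in>successors r z. (if z' = a then c else 0) * g z') = c * g a"
    if "a \<in> successors r z" for a c
    using that finite_successors by (simp add: if_distrib[of "\<lambda>v. v * g _"] cong: if_cong)
  show ?thesis
  proof (cases z)
    case (W w)
    have "WX w SConsNil \<in> successors r z" "WX w SNilCons \<in> successors r z"
      "WX w SNil \<in> successors r z" "WX w SCons \<in> successors r z" "pop (W w) \<in> successors r z"
      using W by (auto simp: successors_def)
    then show ?thesis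
      using point_mass unfolding W
      by (simp only: trans_prob.simps chain_op.simps distrib_right sum.distrib)
  next
    case (WX w x)
    show ?thesis
    proof (cases "x \<in> {SCons, SConsNil}")
      case True
      have "trans_prob r pd z z' * g z'
          = (\<Sum>ys\<in>com_set r. (if z' = W ((x, ys) # w) then com_prob r pd ys else 0) * g z')
            + (if z' = pop (WX w x) then pd ^ r else 0) * g z'" for z'
        unfolding com_prob_def using True WX by (simp add: sum_distrib_right distrib_right)
      then have "(\<Sum>z'\<in>successors r z. trans_prob r pd z z' * g z')
          = (\<Sum>ys\<in>com_set r. \<Sum>z'\<in>successors r z.
                (if z' = W ((x, ys) # w) then com_prob r pd ys else 0) * g z')
            + (\<Sum>z'\<in>successors r z. (if z' = pop (WX w x) then pd ^ r else 0) * g z')"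
        by (simp only: sum.distrib sum.swap[of _ "successors r z" "com_set r"])
      also have "\<dots> = chain_op r pd g z"
        using True WX point_mass[of "pop (WX w x)"] point_mass[of "W ((x, _) # w)"]
        by (simp add: successors_def)
      finally show ?thesis .
    next
      case False
      then show ?thesis
        using WX point_mass[of "pop (WX w x)" 1] by (simp add: successors_def)
    qed
  next
    case Bot
    then show ?thesis by (simp add: successors_def)
  qed
qed

lemma chain_op_const: "chain_op r pd (\<lambda>_. c) z = c"
proof (induction z rule: state.induct)
  case (W w)
  show ?case by (simp add: power2_eq_square algebra_simps)
next
  case (WX w x)
  have "(\<Sum>ys\<in>com_set r. com_prob r pd ys * c) + pd ^ r * c
      = ((\<Sum>ys\<in>com_set r. com_prob r pd ys) + pd ^ r) * c"
    by (simp add: sum_distrib_right distrib_right)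
  then have "(\<Sum>ys\<in>com_set r. com_prob r pd ys * c) + pd ^ r * c = c"
    by (simp add: sum_com_prob)
  then show ?case by simp
qed simp

lemma first_hit_at_Cons_Suc: "first_hit_at B (z # p) (Suc k) \<longleftrightarrow> z \<notin> B \<and> first_hit_at B p k"
  by (auto simp: first_hit_at_def less_Suc_eq_0_disj)

lemma All_le_Suc2: "(\<forall>i\<le>Suc n. P i) \<longleftrightarrow> P 0 \<and> (\<forall>i\<le>n. P (Suc i))"
  using All_less_Suc2[of "Suc n" P] by (simp add: less_Suc_eq_le)

locale drop_shuffle =
  fixes r :: nat and pd :: real
  assumes pd_nonneg: "0 \<le> pd" and pd_le_1: "pd \<le> 1"
begin

lemma pmf_kernel: "pmf (kernel r pd z) z' = trans_prob r pd z z'"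
  unfolding kernel_def
proof (rule pmf_embed_pmf)
  show "0 \<le> trans_prob r pd z z'" for z'
    by (rule trans_prob_nonneg[OF pd_nonneg pd_le_1])
  have "(\<integral>\<^sup>+z'. ennreal (trans_prob r pd z z') \<partial>count_space UNIV)
      = (\<Sum>z'\<in>successors r z. ennreal (trans_prob r pd z z'))"
    by (rule nn_integral_count_space') (auto simp: finite_successors trans_prob_eq_0)
  also have "\<dots> = ennreal (chain_op r pd (\<lambda>_. 1) z)"
    using sum_trans_prob_mult[of r pd z "\<lambda>_. 1"]
    by (simp add: trans_prob_nonneg[OF pd_nonneg pd_le_1])
  finally show "(\<integral>\<^sup>+z'. ennreal (trans_prob r pd z z') \<partial>count_space UNIV) = 1"
    by (simp add: chain_op_const)
qed

lemma set_pmf_kernel: "set_pmf (kernel r pd z) \<subseteq> successors r z"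
  using trans_prob_eq_0 by (metis pmf_kernel set_pmf_iff subsetI)

sublocale finite_kernel "kernel r pd"
  by standard (rule finite_subset[OF set_pmf_kernel finite_successors])

lemma trans_op_eq_chain_op: "trans_op g z = chain_op r pd g z"
proof -
  have "trans_op g z = (\<Sum>z'\<in>successors r z. g z' * pmf (kernel r pd z) z')"
    unfolding trans_op_def
    by (rule integral_measure_pmf_real) (use set_pmf_kernel finite_successors in auto)
  also have "\<dots> = (\<Sum>z'\<in>successors r z. trans_prob r pd z z' * g z')"
    by (intro sum.cong) (simp_all add: pmf_kernel)
  finally show ?thesis
    by (simp only: sum_trans_prob_mult)
qed

lemma prob_traj_Suc:
  "measure_pmf.prob (traj r pd (Suc k) z) X
     = trans_op (\<lambda>z'. measure_pmf.prob (traj r pd k z') {p. z # p \<in> X}) z"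
  by (auto simp: trans_op_def measure_pmf_bind measure_pmf.measure_bind[where N="count_space UNIV"]
      measure_subprob vimage_def)

lemma hit_time_prob_eq_killed:
  "hit_time_prob r pd z B k = killed B (\<lambda>z. if z \<in> B then 1 else 0) k z"
proof (induction k arbitrary: z)
  case (Suc k)
  have "{p. z # p \<in> {p. first_hit_at B p (Suc k)}} = (if z \<in> B then {} else {p. first_hit_at B p k})"
    by (auto simp: first_hit_at_Cons_Suc)
  then show ?case
    using Suc.IH unfolding hit_time_prob_def prob_traj_Suc by simp
qed (simp add: hit_time_prob_def first_hit_at_def)

lemma hit_before_prob_eq_suminf_killed:
  "hit_before_prob r pd z A b = (\<Sum>k. killed (A \<union> {b}) (\<lambda>z. if z = b \<and> z \<notin> A then 1 else 0) k z)"
proof -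
  have "measure_pmf.prob (traj r pd k z) {p. first_hit_at {b} p k \<and> (\<forall>j\<le>k. p ! j \<notin> A)}
      = killed (A \<union> {b}) (\<lambda>z. if z = b \<and> z \<notin> A then 1 else 0) k z" for k
  proof (induction k arbitrary: z)
    case (Suc k)
    have "{p. z # p \<in> {p. first_hit_at {b} p (Suc k) \<and> (\<forall>j\<le>Suc k. p ! j \<notin> A)}}
        = (if z \<in> A \<union> {b} then {} else {p. first_hit_at {b} p k \<and> (\<forall>j\<le>k. p ! j \<notin> A)})"
      by (auto simp: first_hit_at_Cons_Suc All_le_Suc2)
    then show ?case
      using Suc.IH unfolding prob_traj_Suc by simp
  qed (auto simp: first_hit_at_def)
  then show ?thesis
    by (simp add: hit_before_prob_def)
qed

end

section \<open>Sub-trees behave like the whole tree\<close>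

definition valid_state :: "nat \<Rightarrow> state \<Rightarrow> bool" where
  "valid_state r z = (case z of W w \<Rightarrow> valid_word r w | WX w x \<Rightarrow> valid_word r w | Bot \<Rightarrow> True)"

lemma valid_word_Nil [simp]: "valid_word r []"
  by (simp add: valid_word_def)

lemma valid_word_Cons [simp]: "valid_word r ((x, ys) # w) \<longleftrightarrow> ys \<in> com_set r \<and> valid_word r w"
  by (auto simp: valid_word_def)

lemma valid_word_append [simp]: "valid_word r (u @ w) \<longleftrightarrow> valid_word r u \<and> valid_word r w"
  by (auto simp: valid_word_def)

lemma valid_state_simps [simp]:
  "valid_state r (W w) = valid_word r w" "valid_state r (WX w x) = valid_word r w" "valid_state r Bot"
  by (simp_all add: valid_state_def)

lemma valid_state_pop: "valid_state r z \<Longrightarrow> valid_state r (pop z)"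
  by (induction z rule: pop.induct) (auto simp: com_set_def)

lemma valid_state_successors: "valid_state r z \<Longrightarrow> z' \<in> successors r z \<Longrightarrow> valid_state r z'"
  by (cases z) (auto simp: successors_def
      intro: valid_state_pop[of r "W _", simplified] valid_state_pop[of r "WX _ _", simplified])

lemma out_seq_Nil [simp]: "out_seq [] = []"
  by (simp add: out_seq_def)

lemma out_seq_Cons [simp]: "out_seq ((x, y # ys) # w) = out_seq w @ [y]"
  by (simp add: out_seq_def)

lemma out_seq_append [simp]: "out_seq (u @ w) = out_seq w @ out_seq u"
  by (simp add: out_seq_def)

lemma length_out_seq [simp]: "length (out_seq w) = length w"
  by (simp add: out_seq_def)

lemma WX_in_outA [simp]:
  "WX w x \<in> outA r \<sigma> \<longleftrightarrow> valid_word r w \<and> x \<in> {SNil, SNilCons} \<and> out_seq w = \<sigma>"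
  by (auto simp: outA_def)

lemma W_notin_outA [simp]: "W w \<notin> outA r \<sigma>"
  and Bot_notin_outA [simp]: "Bot \<notin> outA r \<sigma>"
  by (auto simp: outA_def)

definition word_size :: "word \<Rightarrow> nat" where
  "word_size w = (\<Sum>(x, ys)\<leftarrow>w. length ys + 1)"

fun state_rank :: "state \<Rightarrow> nat" where
  "state_rank (W w) = 3 * word_size w + 1"
| "state_rank (WX w x) = 3 * word_size w + (if x \<in> {SNilCons, SConsNil} then 3 else 2)"
| "state_rank Bot = 0"

lemma state_rank_pop_less: "z \<noteq> Bot \<Longrightarrow> state_rank (pop z) < state_rank z"
  by (induction z rule: pop.induct) (auto simp: word_size_def split: if_splits)

lemma length_pop_WX: "pop z = WX u x \<Longrightarrow> (case z of W w \<Rightarrow> length u < length w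
    | WX w _ \<Rightarrow> length u \<le> length w | Bot \<Rightarrow> True)"
  by (induction z arbitrary: u x rule: pop.induct) fastforce+

lemma pop_notin_outA: "pop (W w) \<notin> outA r (out_seq w @ \<tau>)"
proof
  assume "pop (W w) \<in> outA r (out_seq w @ \<tau>)"
  then obtain u x where u: "pop (W w) = WX u x" "out_seq u = out_seq w @ \<tau>"
    by (auto simp: outA_def)
  have "length u < length w"
    using length_pop_WX[OF u(1)] by simp
  moreover have "length w \<le> length u"
    using arg_cong[OF u(2), of length] by simp
  ultimately show False
    by simp
qed

fun shift_state :: "word \<Rightarrow> state \<Rightarrow> state" where
  "shift_state w (W u) = W (u @ w)"
| "shift_state w (WX u x) = WX (u @ w) x"
| "shift_state w Bot = pop (W w)"

lemma pop_shift_state: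
  "z \<noteq> Bot \<Longrightarrow> valid_state r z \<Longrightarrow> pop (shift_state w z) = shift_state w (pop z)"
  by (induction z rule: pop.induct) (auto simp: com_set_def)

lemma shift_state_neq_pop:
  assumes "z \<noteq> Bot"
  shows "shift_state w z \<noteq> pop (W w)"
proof -
  have "state_rank (W w) \<le> state_rank (shift_state w z)"
    using assms by (cases z) (auto simp: word_size_def)
  then show ?thesis
    using state_rank_pop_less[of "W w"] by auto
qed

lemma shift_state_in_targets:
  assumes "valid_word r w" "valid_state r z"
  shows "shift_state w z \<in> outA r (out_seq w @ \<tau>) \<union> {pop (W w)} \<longleftrightarrow> z \<in> outA r \<tau> \<union> {Bot}"
  using assms shift_state_neq_pop[of z w] by (cases z) auto

lemma chain_op_shift_state:
  assumes "z \<noteq> Bot" "valid_state r z"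
  shows "chain_op r pd g (shift_state w z) = chain_op r pd (\<lambda>z'. g (shift_state w z')) z"
  using assms(1) pop_shift_state[OF assms, of w] by (cases z) auto

context drop_shuffle
begin

lemma valid_state_kernel: "valid_state r z \<Longrightarrow> z' \<in> set_pmf (kernel r pd z) \<Longrightarrow> valid_state r z'"
  using set_pmf_kernel valid_state_successors by blast

lemma killed_subtree:
  assumes "valid_word r w"
    and boundary: "\<And>z. valid_state r z \<Longrightarrow> g' (shift_state w z) = g z"
  shows "killed (outA r (out_seq w @ \<tau>) \<union> {pop (W w)}) g' k (W w)
       = killed (outA r \<tau> \<union> {Bot}) g k (W [])"
proof -
  have "killed (outA r (out_seq w @ \<tau>) \<union> {pop (W w)}) g' k (shift_state w (W []))
      = killed (outA r \<tau> \<union> {Bot}) g k (W [])"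
  proof (rule killed_transfer[where S = "{z. valid_state r z}"])
    show "shift_state w z \<in> outA r (out_seq w @ \<tau>) \<union> {pop (W w)} \<longleftrightarrow> z \<in> outA r \<tau> \<union> {Bot}"
      if "z \<in> {z. valid_state r z}" for z
      using shift_state_in_targets assms that by blast
    show "trans_op h (shift_state w z) = trans_op (\<lambda>z'. h (shift_state w z')) z"
      if "z \<in> {z. valid_state r z}" "z \<notin> outA r \<tau> \<union> {Bot}" for z h
      using that by (simp add: trans_op_eq_chain_op chain_op_shift_state)
  qed (use boundary valid_state_kernel in auto)
  then show ?thesis
    by simp
qed

lemma hit_time_prob_subtree:
  assumes "subtree_root r s"
  shows "hit_time_prob r pd s (outA r (root_prefix s @ \<tau>) \<union> {pop s}) k
       = hit_time_prob r pd (W []) (outA r \<tau> \<union> {Bot}) k"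
proof -
  obtain w where s: "s = W w" and w: "valid_word r w"
    using assms by (auto simp: subtree_root_def)
  show ?thesis
    unfolding s root_prefix_def hit_time_prob_eq_killed state.case
    by (rule killed_subtree[OF w]) (simp only: shift_state_in_targets[OF w])
qed

lemma hit_before_prob_subtree:
  assumes "subtree_root r s"
  shows "hit_before_prob r pd s (outA r (root_prefix s @ \<tau>)) (pop s)
       = hit_before_prob r pd (W []) (outA r \<tau>) Bot"
proof -
  obtain w where s: "s = W w" and w: "valid_word r w"
    using assms by (auto simp: subtree_root_def)
  have "(if shift_state w z = pop (W w) \<and> shift_state w z \<notin> outA r (out_seq w @ \<tau>) then 1 else 0)
      = (if z = Bot \<and> z \<notin> outA r \<tau> then 1 else (0::real))" for z
    using shift_state_neq_pop[of z w] pop_notin_outA[of w r \<tau>] by (cases "z = Bot") auto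
  then show ?thesis
    unfolding s root_prefix_def hit_before_prob_eq_suminf_killed state.case
    by (simp only: killed_subtree[OF w])
qed

end

section \<open>The chain reaches \<open>\<bottom>\<close> almost surely\<close>

function pop_trace :: "state \<Rightarrow> state list" where
  "pop_trace z = (if z = Bot then [] else z # pop_trace (pop z))"
  by auto
termination
  by (relation "Wellfounded.measure state_rank") (auto simp: state_rank_pop_less)

declare pop_trace.simps [simp del]

lemma pop_trace_Bot [simp]: "pop_trace Bot = []"
  by (simp add: pop_trace.simps)

lemma pop_trace_not_Bot: "z \<noteq> Bot \<Longrightarrow> pop_trace z = z # pop_trace (pop z)"
  by (simp add: pop_trace.simps)

text \<open>Charging \<open>E\<close> for each pending sub-tree and \<open>c\<close> for each pending list of children, the
  expected charge falls by at least \<open>1\<close> per step as soon as \<open>E \<ge> 1 + (1 - pd)(c + 1)\<close> and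
  \<open>c \<ge> 1 + E r (1 - pd)\<close>, where \<open>r (1 - pd)\<close> is the expected number of children; such \<open>E\<close> and \<open>c\<close>
  exist when \<open>r (1 - pd)\<^sup>2 < 1\<close>.\<close>

fun frame_cost :: "real \<Rightarrow> real \<Rightarrow> state \<Rightarrow> real" where
  "frame_cost E c (W w) = E"
| "frame_cost E c (WX w x) = (if x \<in> {SCons, SConsNil} then c else 1)"
| "frame_cost E c Bot = 0"

definition lyapunov :: "real \<Rightarrow> real \<Rightarrow> state \<Rightarrow> real" where
  "lyapunov E c z = (\<Sum>z'\<leftarrow>pop_trace z. frame_cost E c z')"

lemma lyapunov_Bot [simp]: "lyapunov E c Bot = 0"
  by (simp add: lyapunov_def)

lemma lyapunov_pop: "z \<noteq> Bot \<Longrightarrow> lyapunov E c z = frame_cost E c z + lyapunov E c (pop z)"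
  by (simp add: lyapunov_def pop_trace_not_Bot)

lemma lyapunov_nonneg: "0 \<le> E \<Longrightarrow> 0 \<le> c \<Longrightarrow> 0 \<le> lyapunov E c z"
proof (induction z rule: pop_trace.induct)
  case (1 z)
  then show ?case
    by (cases z) (auto simp: lyapunov_pop)
qed

lemma lyapunov_children:
  "ys \<noteq> [] \<Longrightarrow> lyapunov E c (W ((x, ys) # w)) = real (length ys) * E + lyapunov E c (pop (WX w x))"
proof (induction ys)
  case (Cons y ys)
  then show ?case
    by (cases ys) (simp_all add: lyapunov_pop[of "W _"] algebra_simps)
qed simp

context drop_shuffle
begin

lemma lyapunov_constants:
  assumes "real r * (1 - pd)\<^sup>2 < 1"
  obtains E c where "0 \<le> E" "0 \<le> c"
    "1 + (1 - pd) * (c + 1) \<le> E" "1 + E * (real r * (1 - pd)) \<le> c"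
proof
  define E where "E = (3 - 2 * pd) / (1 - real r * (1 - pd)\<^sup>2)"
  have "E * (1 - real r * (1 - pd)\<^sup>2) = 3 - 2 * pd"
    unfolding E_def using assms by simp
  then show "1 + (1 - pd) * ((1 + E * (real r * (1 - pd))) + 1) \<le> E"
    by (simp add: power2_eq_square algebra_simps)
  show E_nonneg: "0 \<le> E"
    unfolding E_def using assms pd_le_1 by simp
  then show "0 \<le> 1 + E * (real r * (1 - pd))"
    using pd_le_1 by simp
qed simp

lemma lyapunov_drift:
  assumes E: "1 + (1 - pd) * (c + 1) \<le> E" and c: "1 + E * (real r * (1 - pd)) \<le> c"
    and "z \<noteq> Bot"
  shows "trans_op (lyapunov E c) z \<le> lyapunov E c z - 1"
proof (cases z)
  case (W w)
  have "trans_op (lyapunov E c) z = lyapunov E c (pop (W w)) + (1 - pd) * (c + 1)"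
    using W by (simp add: trans_op_eq_chain_op lyapunov_pop[of "WX _ _"] power2_eq_square algebra_simps)
  then show ?thesis
    using W E by (simp add: lyapunov_pop[of "W _"])
next
  case (WX w x)
  show ?thesis
  proof (cases "x \<in> {SCons, SConsNil}")
    case True
    have "lyapunov E c (W ((x, ys) # w)) = real (length ys) * E + lyapunov E c (pop (WX w x))"
      if "ys \<in> com_set r" for ys
      using that by (intro lyapunov_children) (auto simp: com_set_def)
    then have "(\<Sum>ys\<in>com_set r. com_prob r pd ys * lyapunov E c (W ((x, ys) # w)))
        = (\<Sum>ys\<in>com_set r. E * (com_prob r pd ys * length ys)
            + com_prob r pd ys * lyapunov E c (pop (WX w x)))"
      by (intro sum.cong) (simp_all add: algebra_simps)
    also have "\<dots> = E * (\<Sum>ys\<in>com_set r. com_prob r pd ys * length ys)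
          + (\<Sum>ys\<in>com_set r. com_prob r pd ys) * lyapunov E c (pop (WX w x))"
      by (simp only: sum.distrib sum_distrib_left sum_distrib_right)
    also have "\<dots> = E * (real r * (1 - pd)) + (1 - pd ^ r) * lyapunov E c (pop (WX w x))"
      using sum_com_prob[of r pd] by (simp only: sum_com_prob_length flip: eq_diff_eq)
    finally have "trans_op (lyapunov E c) z = E * (real r * (1 - pd)) + lyapunov E c (pop (WX w x))"
      using True WX by (simp add: trans_op_eq_chain_op algebra_simps)
    then show ?thesis
      using True WX c by (simp add: lyapunov_pop[of "WX _ _"])
  next
    case False
    then show ?thesis
      using WX by (simp add: trans_op_eq_chain_op lyapunov_pop[of "WX _ _"])
  qed
qed (use assms in simp)

lemma survival_tendsto_0_subcritical:
  assumes "real r * (1 - pd)\<^sup>2 < 1" and "Bot \<in> B"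
  shows "(\<lambda>k. survival B k z) \<longlonglongrightarrow> 0"
proof -
  obtain E c where "0 \<le> E" "0 \<le> c"
    "1 + (1 - pd) * (c + 1) \<le> E" "1 + E * (real r * (1 - pd)) \<le> c"
    using lyapunov_constants[OF assms(1)] .
  then show ?thesis
    using assms(2) by (intro survival_tendsto_0[of "lyapunov E c"]) (auto intro: lyapunov_nonneg lyapunov_drift)
qed

end

section \<open>The probability of leaving the tree before producing \<open>\<tau>\<close>\<close>

lemma prefix_snoc_iff: "prefix (xs @ [y]) ys \<longleftrightarrow> strict_prefix xs ys \<and> ys ! length xs = y"
proof
  assume "prefix (xs @ [y]) ys"
  then obtain zs where "ys = xs @ y # zs"
    by (auto elim: prefixE)
  then show "strict_prefix xs ys \<and> ys ! length xs = y"
    by (auto intro: strict_prefixI')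
next
  assume "strict_prefix xs ys \<and> ys ! length xs = y"
  then obtain zs where "ys = xs @ y # zs"
    by (auto elim: strict_prefixE')
  then show "prefix (xs @ [y]) ys"
    by simp
qed

definition subtree_avoid :: "real \<Rightarrow> nat list \<Rightarrow> nat list \<Rightarrow> real" where
  "subtree_avoid pd \<tau> \<pi> = (if prefix \<pi> \<tau> then 1 - (1 - pd) ^ (2 * (length \<tau> - length \<pi>) + 1) else 1)"

definition children_avoid :: "real \<Rightarrow> nat list \<Rightarrow> nat list \<Rightarrow> real" where
  "children_avoid pd \<tau> \<pi> = (if strict_prefix \<pi> \<tau> then 1 - (1 - pd) ^ (2 * (length \<tau> - length \<pi>)) else 1)"

definition output_avoid :: "nat list \<Rightarrow> nat list \<Rightarrow> real" where
  "output_avoid \<tau> \<pi> = (if \<pi> = \<tau> then 0 else 1)"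

text \<open>\<open>frame_avoid pd \<tau> z\<close> is the probability that the chain started at \<open>z\<close> reaches \<open>Pop(z)\<close>
  without visiting \<open>A\<^sub>\<tau>\<close>; hence \<open>avoid_prob pd \<tau> z\<close> is the probability of reaching \<open>\<bottom>\<close> first.\<close>

fun frame_avoid :: "real \<Rightarrow> nat list \<Rightarrow> state \<Rightarrow> real" where
  "frame_avoid pd \<tau> (W w) = subtree_avoid pd \<tau> (out_seq w)"
| "frame_avoid pd \<tau> (WX w x) =
     (if x \<in> {SCons, SConsNil} then children_avoid pd \<tau> (out_seq w) else output_avoid \<tau> (out_seq w))"
| "frame_avoid pd \<tau> Bot = 1"

definition avoid_prob :: "real \<Rightarrow> nat list \<Rightarrow> state \<Rightarrow> real" where
  "avoid_prob pd \<tau> z = (\<Prod>z'\<leftarrow>pop_trace z. frame_avoid pd \<tau> z')"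

lemma avoid_prob_Bot [simp]: "avoid_prob pd \<tau> Bot = 1"
  by (simp add: avoid_prob_def)

lemma avoid_prob_pop: "z \<noteq> Bot \<Longrightarrow> avoid_prob pd \<tau> z = frame_avoid pd \<tau> z * avoid_prob pd \<tau> (pop z)"
  by (simp add: avoid_prob_def pop_trace_not_Bot)

lemma avoid_prob_root: "avoid_prob pd \<tau> (W []) = 1 - (1 - pd) ^ (2 * length \<tau> + 1)"
  by (simp add: avoid_prob_pop subtree_avoid_def)

lemma avoid_prob_outA: "z \<in> outA r \<tau> \<Longrightarrow> avoid_prob pd \<tau> z = 0"
  by (auto simp: outA_def avoid_prob_pop output_avoid_def)

lemma avoid_prob_children:
  "ys \<noteq> [] \<Longrightarrow> avoid_prob pd \<tau> (W ((x, ys) # w))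
     = (\<Prod>y\<leftarrow>ys. subtree_avoid pd \<tau> (out_seq w @ [y])) * avoid_prob pd \<tau> (pop (WX w x))"
proof (induction ys)
  case (Cons y ys)
  then show ?case
    by (cases ys) (simp_all add: avoid_prob_pop[of "W _"] mult.assoc)
qed simp

lemma avoid_prob_bounds:
  assumes "0 \<le> pd" "pd \<le> 1"
  shows "0 \<le> avoid_prob pd \<tau> z \<and> avoid_prob pd \<tau> z \<le> 1"
proof (induction z rule: pop_trace.induct)
  case (1 z)
  have "0 \<le> (1 - pd) ^ n" "(1 - pd) ^ n \<le> 1" for n
    using assms by (simp_all add: power_le_one)
  then have "0 \<le> frame_avoid pd \<tau> z \<and> frame_avoid pd \<tau> z \<le> 1"
    by (cases z) (simp_all add: subtree_avoid_def children_avoid_def output_avoid_def del: power_Suc)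
  then show ?case
    using 1 by (cases "z = Bot") (auto simp: avoid_prob_pop intro: mult_le_one)
qed

lemma subtree_avoid_eq:
  "subtree_avoid pd \<tau> \<pi>
     = (1 - pd)\<^sup>2 * children_avoid pd \<tau> \<pi> * output_avoid \<tau> \<pi>
       + pd * (1 - pd) * (output_avoid \<tau> \<pi> + children_avoid pd \<tau> \<pi>) + pd\<^sup>2"
proof -
  have power_odd: "(1 - pd) ^ (2 * n + 1) = (1 - pd) * (1 - pd) ^ (2 * n)" for n
    by simp
  consider "\<pi> = \<tau>" | "strict_prefix \<pi> \<tau>" | "\<not> prefix \<pi> \<tau>"
    by (auto simp: strict_prefix_def)
  then show ?thesis
  proof cases
    case 2
    then have "prefix \<pi> \<tau>" "\<pi> \<noteq> \<tau>"
      by (auto simp: strict_prefix_def)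
    with 2 show ?thesis
      by (simp add: subtree_avoid_def children_avoid_def output_avoid_def power_odd)
        (simp add: power2_eq_square algebra_simps)
  qed (auto simp: subtree_avoid_def children_avoid_def output_avoid_def power2_eq_square algebra_simps)
qed

lemma sum_com_prob_subtree_avoid:
  assumes "set \<tau> \<subseteq> {1..r}"
  shows "(\<Sum>ys\<in>com_set r. com_prob r pd ys * (\<Prod>y\<leftarrow>ys. subtree_avoid pd \<tau> (\<pi> @ [y]))) + pd ^ r
       = children_avoid pd \<tau> \<pi>"
proof (cases "strict_prefix \<pi> \<tau>")
  case True
  define t where "t = \<tau> ! length \<pi>"
  define d where "d = length \<tau> - Suc (length \<pi>)"
  have "t \<in> set \<tau>"
    using prefix_length_less[OF True] by (simp add: t_def)
  then have "t \<in> {1..r}"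
    using assms by blast
  have child_avoid: "subtree_avoid pd \<tau> (\<pi> @ [y]) = (if y = t then 1 - (1 - pd) ^ (2 * d + 1) else 1)"
    for y
    using True by (auto simp: subtree_avoid_def prefix_snoc_iff t_def d_def)
  have "(\<Sum>ys\<in>com_set r. com_prob r pd ys * (\<Prod>y\<leftarrow>ys. subtree_avoid pd \<tau> (\<pi> @ [y]))) + pd ^ r
      = (\<Prod>y\<in>{1..r}. (1 - pd) * subtree_avoid pd \<tau> (\<pi> @ [y]) + pd)"
    by (rule sum_com_prob_prod_list)
  also have "\<dots> = (\<Prod>y\<in>{1..r}. if y = t then (1 - pd) * (1 - (1 - pd) ^ (2 * d + 1)) + pd else 1)"
    by (intro prod.cong) (simp_all only: child_avoid, auto)
  also have "\<dots> = 1 - (1 - pd) ^ (2 * (length \<tau> - length \<pi>))"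
  proof -
    have "2 * (length \<tau> - length \<pi>) = Suc (Suc (2 * d))"
      using prefix_length_less[OF True] by (simp add: d_def)
    then show ?thesis
      using \<open>t \<in> {1..r}\<close> by (simp add: algebra_simps)
  qed
  finally show ?thesis
    using True by (simp add: children_avoid_def)
next
  case False
  then have "subtree_avoid pd \<tau> (\<pi> @ [y]) = 1" for y
    by (simp add: subtree_avoid_def prefix_snoc_iff)
  then show ?thesis
    using False sum_com_prob[of r pd] by (simp add: children_avoid_def map_replicate_const)
qed

context drop_shuffle
begin

lemma avoid_prob_harmonic:
  assumes "set \<tau> \<subseteq> {1..r}" "valid_state r z" "z \<notin> outA r \<tau> \<union> {Bot}"
  shows "trans_op (avoid_prob pd \<tau>) z = avoid_prob pd \<tau> z"
proof (cases z)
  case (W u)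
  then show ?thesis
    by (simp add: trans_op_eq_chain_op avoid_prob_pop[of "W _"] avoid_prob_pop[of "WX _ _"]
        subtree_avoid_eq[of pd \<tau> "out_seq u"] algebra_simps)
next
  case (WX u x)
  show ?thesis
  proof (cases "x \<in> {SCons, SConsNil}")
    case True
    have "avoid_prob pd \<tau> (W ((x, ys) # u))
        = (\<Prod>y\<leftarrow>ys. subtree_avoid pd \<tau> (out_seq u @ [y])) * avoid_prob pd \<tau> (pop (WX u x))"
      if "ys \<in> com_set r" for ys
      using that by (intro avoid_prob_children) (auto simp: com_set_def)
    then have "(\<Sum>ys\<in>com_set r. com_prob r pd ys * avoid_prob pd \<tau> (W ((x, ys) # u)))
        = (\<Sum>ys\<in>com_set r. com_prob r pd ys * (\<Prod>y\<leftarrow>ys. subtree_avoid pd \<tau> (out_seq u @ [y])))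
          * avoid_prob pd \<tau> (pop (WX u x))"
      by (simp add: sum_distrib_right mult.assoc)
    then have "trans_op (avoid_prob pd \<tau>) z
        = ((\<Sum>ys\<in>com_set r. com_prob r pd ys * (\<Prod>y\<leftarrow>ys. subtree_avoid pd \<tau> (out_seq u @ [y])))
            + pd ^ r) * avoid_prob pd \<tau> (pop (WX u x))"
      using True WX by (simp add: trans_op_eq_chain_op algebra_simps)
    then show ?thesis
      using True WX assms(1) by (simp add: sum_com_prob_subtree_avoid avoid_prob_pop[of "WX _ _"])
  next
    case False
    then have "output_avoid \<tau> (out_seq u) = 1"
      using assms WX by (cases x) (auto simp: output_avoid_def)
    then show ?thesis
      using False WX by (simp add: trans_op_eq_chain_op avoid_prob_pop[of "WX _ _"])
  qed
qed (use assms in simp)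

lemma hit_before_prob_root:
  assumes "real r * (1 - pd)\<^sup>2 < 1" "set \<tau> \<subseteq> {1..r}"
  shows "hit_before_prob r pd (W []) (outA r \<tau>) Bot = 1 - (1 - pd) ^ (2 * length \<tau> + 1)"
proof -
  let ?B = "outA r \<tau> \<union> {Bot}"
  have "(\<lambda>k. killed ?B (\<lambda>z. if z \<in> ?B then avoid_prob pd \<tau> z else 0) k (W [])) sums avoid_prob pd \<tau> (W [])"
  proof (rule harmonic_sums_killed[where S = "{z. valid_state r z}" and M = 1])
    show "\<bar>avoid_prob pd \<tau> z\<bar> \<le> 1" for z
      using avoid_prob_bounds[OF pd_nonneg pd_le_1] by (simp add: abs_le_iff)
    show "(\<lambda>k. survival ?B k (W [])) \<longlonglongrightarrow> 0"
      by (rule survival_tendsto_0_subcritical[OF assms(1)]) simp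
  qed (use valid_state_kernel avoid_prob_harmonic[OF assms(2)] in auto)
  moreover have "(\<lambda>z. if z \<in> ?B then avoid_prob pd \<tau> z else 0) = (\<lambda>z. if z = Bot \<and> z \<notin> outA r \<tau> then 1 else 0)"
    by (auto simp: avoid_prob_outA)
  ultimately show ?thesis
    by (simp add: hit_before_prob_eq_suminf_killed sums_iff avoid_prob_root)
qed

end

theorem proposition3p11:
  fixes r :: nat and pd :: real
  assumes "r \<ge> 1" and "1 - 1 / sqrt (real r) < pd" and "pd < 1"
  shows "(\<forall>s \<tau>. subtree_root r s \<and> set \<tau> \<subseteq> {1..r} \<longrightarrow>
            hit_before_prob r pd s (outA r (root_prefix s @ \<tau>)) (pop s)
              = 1 - (1 - pd) ^ (2 * length \<tau> + 1))
       \<and> (\<forall>s \<tau>. subtree_root r s \<and> set \<tau> \<subseteq> {1..r} \<longrightarrow>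
            exp_hit r pd s (outA r (root_prefix s @ \<tau>) \<union> {pop s})
              = exp_hit r pd (W []) (outA r \<tau> \<union> {Bot}))"
proof -
  have "1 - pd < 1 / sqrt (real r)" "1 / sqrt (real r) \<le> 1"
    using assms by auto
  then have "(1 - pd)\<^sup>2 < (1 / sqrt (real r))\<^sup>2" and "0 \<le> pd"
    using assms(3) by (auto intro!: power_strict_mono)
  then have subcritical: "real r * (1 - pd)\<^sup>2 < 1"
    using assms(1) by (simp add: field_simps)
  interpret drop_shuffle r pd
    using \<open>0 \<le> pd\<close> assms(3) by unfold_locales simp_all
  show ?thesis
    using hit_before_prob_subtree hit_before_prob_root[OF subcritical]
      hit_time_prob_subtree by (simp add: exp_hit_def)
qed

end
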